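(* For every approval-based participatory budgeting instance $I=(N,\mathcal{T},B,\mathrm{cost},\mathcal{A})$ and every nonempty set of projects $T\subseteq\mathcal{T}$, the proportionality degree of the Method of Equal Shares satisfies \[ d_{\textsc{mes}}(T)\;\geq\;\frac{1}{2}\left(\frac{\mathrm{cost}(T)}{\max_{t\in T}\mathrm{cost}(t)}-1\right). \]
   Context: An approval-based PB instance is $I=(N,\mathcal{T},B,\mathrm{cost},\mathcal{A})$: $N$ is a set of $n$ voters, $\mathcal{T}$ a finite set of projects, $B>0$ a budget, $\mathrm{cost}:\mathcal{T}\to\mathbb{R}_{>0}$, with $\mathrm{cost}(S)=\sum_{t\in S}\mathrm{cost}(t)$, and $\mathcal{A}=(A_i)_{i\in N}$ with $A_i\subseteq\mathcal{T}$ the projects approved by voter $i$. A PB rule $f$ maps each instance to a set $W=f(I)\subseteq\mathcal{T}$ with $\mathrm{cost}(W)\le B$. For $T\subseteq\mathcal{T}$, a group $V\subseteq N$ is $T$-cohesive if $T\subseteq\bigcap_{i\in V}A_i$ and $\mathrm{cost}(T)/B\le |V|/n$; $\mathcal{V}(T)$ denotes the set of all $T$-cohesive groups. The average satisfaction of $V$ w.r.t. $W$ is $\mathrm{avg}_W(V)=\frac{1}{|V|}\sum_{i\in V}|W\cap A_i|$. The proportionality degree of $f$ for $T$ (on instance $I$) is $d_f(T)=\sup\{g:\ \min_{V\in\mathcal{V}(T)}\mathrm{avg}_{f(I)}(V)\ge \min(|T|,g)\}$. Method of Equal Shares (\textsc{mes}): each voter starts with budget $B/n$; start with $W=\emptyset$.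 Let $\ell_i$ denote voter $i$'s remaining budget ($B/n$ minus what $i$ has paid so far) and $N_t=\{i\in N: t\in A_i\}$. For $\rho\ge 0$, a project $t\in\mathcal{T}\setminus W$ is $\rho$-affordable if $\sum_{i\in N_t}\min(\ell_i,\rho)=\mathrm{cost}(t)$. If no project is $\rho$-affordable for any $\rho$, \textsc{mes} stops and returns $W$; otherwise it adds to $W$ a project that is $\rho$-affordable for the minimum possible $\rho$ (ties broken arbitrarily), each $i\in N_t$ paying $\min(\ell_i,\rho)$, and repeats. *)

theory Defs
  imports Complex_Main "HOL-Library.Extended_Real"
begin

definition pb_instance ::
  "'v set \<Rightarrow> 'p set \<Rightarrow> real \<Rightarrow> ('p \<Rightarrow> real) \<Rightarrow> ('v \<Rightarrow> 'p set) \<Rightarrow> bool" where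
  "pb_instance N P B cost A \<longleftrightarrow>
     finite N \<and> N \<noteq> {} \<and> finite P \<and> B > 0 \<and>
     (\<forall>t\<in>P. cost t > 0) \<and> (\<forall>i\<in>N. A i \<subseteq> P)"

definition setcost :: "('p \<Rightarrow> real) \<Rightarrow> 'p set \<Rightarrow> real" where
  "setcost cost S = (\<Sum>t\<in>S. cost t)"

definition supporters :: "'v set \<Rightarrow> ('v \<Rightarrow> 'p set) \<Rightarrow> 'p \<Rightarrow> 'v set" where
  "supporters N A t = {i\<in>N. t \<in> A i}"

definition cohesive :: "'v set \<Rightarrow> real \<Rightarrow> ('p \<Rightarrow> real) \<Rightarrow> ('v \<Rightarrow> 'p set)
    \<Rightarrow> 'p set \<Rightarrow> 'v set \<Rightarrow> bool" where
  "cohesive N B cost A T V \<longleftrightarrow>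
     V \<subseteq> N \<and> T \<subseteq> (\<Inter>i\<in>V. A i) \<and>
     setcost cost T / B \<le> real (card V) / real (card N)"

definition avg_sat :: "('v \<Rightarrow> 'p set) \<Rightarrow> 'p set \<Rightarrow> 'v set \<Rightarrow> real" where
  "avg_sat A W V = (\<Sum>i\<in>V. real (card (W \<inter> A i))) / real (card V)"

definition prop_degree :: "'v set \<Rightarrow> real \<Rightarrow> ('p \<Rightarrow> real) \<Rightarrow> ('v \<Rightarrow> 'p set)
    \<Rightarrow> 'p set \<Rightarrow> 'p set \<Rightarrow> ereal" where
  "prop_degree N B cost A W T =
     Sup {ereal g | g. \<forall>V. cohesive N B cost A T V \<longrightarrow>
                          avg_sat A W V \<ge> min (real (card T)) g}"

text \<open>Method of Equal Shares. A state is (W, l) with l i the remaining budget of voter i.\<close>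
definition affordable :: "'v set \<Rightarrow> ('p \<Rightarrow> real) \<Rightarrow> ('v \<Rightarrow> 'p set)
    \<Rightarrow> ('v \<Rightarrow> real) \<Rightarrow> real \<Rightarrow> 'p \<Rightarrow> bool" where
  "affordable N cost A l \<rho> t \<longleftrightarrow>
     \<rho> \<ge> 0 \<and> (\<Sum>i\<in>supporters N A t. min (l i) \<rho>) = cost t"

definition mes_step :: "'v set \<Rightarrow> 'p set \<Rightarrow> ('p \<Rightarrow> real) \<Rightarrow> ('v \<Rightarrow> 'p set)
    \<Rightarrow> 'p set \<times> ('v \<Rightarrow> real) \<Rightarrow> 'p set \<times> ('v \<Rightarrow> real) \<Rightarrow> bool" where
  "mes_step N P cost A s s' \<longleftrightarrow>
     (\<exists>t \<rho>. t \<in> P - fst s \<and> affordable N cost A (snd s) \<rho> t \<and>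
        (\<forall>t'\<in>P - fst s. \<forall>\<rho>'. affordable N cost A (snd s) \<rho>' t' \<longrightarrow> \<rho> \<le> \<rho>') \<and>
        s' = (insert t (fst s),
              (\<lambda>i. if i \<in> supporters N A t then snd s i - min (snd s i) \<rho> else snd s i)))"

definition mes_terminal :: "'v set \<Rightarrow> 'p set \<Rightarrow> ('p \<Rightarrow> real) \<Rightarrow> ('v \<Rightarrow> 'p set)
    \<Rightarrow> 'p set \<times> ('v \<Rightarrow> real) \<Rightarrow> bool" where
  "mes_terminal N P cost A s \<longleftrightarrow>
     \<not> (\<exists>t\<in>P - fst s. \<exists>\<rho>. affordable N cost A (snd s) \<rho> t)"

text \<open>W is a possible output of MES (for some tie-breaking).\<close>
definition mes_outcome :: "'v set \<Rightarrow> 'p set \<Rightarrow> real \<Rightarrow> ('p \<Rightarrow> real)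
    \<Rightarrow> ('v \<Rightarrow> 'p set) \<Rightarrow> 'p set \<Rightarrow> bool" where
  "mes_outcome N P B cost A W \<longleftrightarrow>
     (\<exists>l. (mes_step N P cost A)\<^sup>*\<^sup>* ({}, (\<lambda>i. B / real (card N))) (W, l) \<and>
          mes_terminal N P cost A (W, l))"

end

theory Submission
  imports Defs
begin

text \<open>If \<open>T \<subseteq> W\<close>, every member of a \<open>T\<close>-cohesive group \<open>V\<close> approves \<open>|T|\<close> selected
  projects. Otherwise fix \<open>t\<^sub>0 \<in> T - W\<close>, let \<open>c = max cost(T)\<close> and \<open>b = B/n\<close>. The deficit of
  \<open>V\<close>, i.e. the money \<open>V\<close> has spent plus the sum over ordered pairs \<open>i, j \<in> V\<close> of
  \<open>b - min(\<ell>\<^sub>i, \<ell>\<^sub>j)\<close>, grows by at most \<open>2c\<close> per unit of satisfaction that a step of MES gives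
  to \<open>V\<close>: as \<open>t\<^sub>0\<close> was not bought first, \<open>V\<close> pays at most \<open>cost(t\<^sub>0)\<close> at the price \<open>\<rho>\<close>
  of the step. At termination \<open>V\<close> cannot afford \<open>t\<^sub>0\<close>, so its remaining money is at most \<open>c\<close>
  and its deficit is at least \<open>(|V| + 1)(|V| b - c)\<close>. Cohesiveness gives \<open>|V| b \<ge> cost(T)\<close>,
  and dividing by \<open>2c|V|\<close> yields the bound.\<close>

definition total_sat :: "('v \<Rightarrow> 'p set) \<Rightarrow> 'p set \<Rightarrow> 'v set \<Rightarrow> real" where
  "total_sat A W V = (\<Sum>i\<in>V. real (card (W \<inter> A i)))"

definition deficit :: "'v set \<Rightarrow> real \<Rightarrow> ('v \<Rightarrow> real) \<Rightarrow> real" where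
  "deficit V b l = (\<Sum>i\<in>V. b - l i) + (\<Sum>i\<in>V. \<Sum>j\<in>V. b - min (l i) (l j))"

lemma total_sat_insert:
  assumes "finite V" "finite W" "t \<notin> W"
  shows "total_sat A (insert t W) V = total_sat A W V + real (card {i\<in>V. t \<in> A i})"
proof -
  have "total_sat A (insert t W) V = (\<Sum>i\<in>V. real (card (W \<inter> A i)) + (if t \<in> A i then 1 else 0))"
    unfolding total_sat_def using assms(2,3) by (intro sum.cong) (auto simp: Int_insert_left)
  also have "\<dots> = total_sat A W V + real (card {i\<in>V. t \<in> A i})"
    using assms(1) by (simp add: sum.distrib total_sat_def sum.If_cases Int_def)
  finally show ?thesis .
qed

lemma deficit_initial [simp]: "deficit V b (\<lambda>i. b) = 0"
  by (simp add: deficit_def)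

lemma deficit_lower_bound:
  "(real (card V) + 1) * (real (card V) * b - (\<Sum>i\<in>V. l i)) \<le> deficit V b l"
proof -
  have "(\<Sum>i\<in>V. \<Sum>j\<in>V. b - l i) \<le> (\<Sum>i\<in>V. \<Sum>j\<in>V. b - min (l i) (l j))"
    by (intro sum_mono) auto
  moreover have "(\<Sum>i\<in>V. \<Sum>j\<in>V. b - l i) = real (card V) * (\<Sum>i\<in>V. b - l i)"
    by (simp add: sum_distrib_left)
  moreover have "(\<Sum>i\<in>V. b - l i) = real (card V) * b - (\<Sum>i\<in>V. l i)"
    by (simp add: sum_subtractf)
  ultimately show ?thesis
    unfolding deficit_def by (simp add: algebra_simps)
qed

lemma min_decrease_after_payment:
  fixes x y \<rho> :: real
  assumes "0 \<le> x" "0 \<le> y" "0 \<le> \<rho>"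
  shows "min x y - min (if p then x - min x \<rho> else x) (if q then y - min y \<rho> else y)
           \<le> (if p then min y \<rho> else if q then min x \<rho> else 0)"
  using assms by (auto simp: min_def)

lemma deficit_after_payment:
  fixes l l' :: "'v \<Rightarrow> real"
  assumes fin: "finite V" and KV: "K \<subseteq> V" and nonneg: "\<forall>j\<in>V. 0 \<le> l j" "0 \<le> \<rho>"
    and l': "\<forall>j\<in>V. l' j = (if j \<in> K then l j - min (l j) \<rho> else l j)"
    and price: "(\<Sum>j\<in>V. min (l j) \<rho>) \<le> c"
  shows "deficit V b l' \<le> deficit V b l + 2 * real (card K) * c"
proof -
  define m where "m j = min (l j) \<rho>" for j
  define k where "k = real (card K)"
  have m_nonneg: "0 \<le> m j" if "j \<in> V" for j
    using that nonneg by (simp add: m_def)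
  have split_V: "(\<Sum>j\<in>V. f j) = (\<Sum>j\<in>K. f j) + (\<Sum>j\<in>V - K. f j)" for f :: "'v \<Rightarrow> real"
    using sum.subset_diff[OF KV fin, of f] by simp
  have indicator_K: "(\<Sum>j\<in>V. if j \<in> K then x else 0) = k * x" for x
    using fin KV by (simp add: sum.If_cases Int_absorb1 k_def)
  have spent: "(\<Sum>i\<in>V. b - l' i) - (\<Sum>i\<in>V. b - l i) = (\<Sum>j\<in>K. m j)"
  proof -
    have "(\<Sum>i\<in>V. b - l' i) - (\<Sum>i\<in>V. b - l i) = (\<Sum>j\<in>V. if j \<in> K then m j else 0)"
      unfolding sum_subtractf[symmetric] using l' by (intro sum.cong) (auto simp: m_def)
    also have "\<dots> = (\<Sum>j\<in>K. m j)"
      using fin KV by (simp add: sum.If_cases Int_absorb1)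
    finally show ?thesis .
  qed
  have "(\<Sum>i\<in>V. \<Sum>j\<in>V. b - min (l' i) (l' j)) - (\<Sum>i\<in>V. \<Sum>j\<in>V. b - min (l i) (l j))
      = (\<Sum>i\<in>V. \<Sum>j\<in>V. min (l i) (l j) - min (l' i) (l' j))"
    by (simp add: sum_subtractf[symmetric])
  also have "\<dots> \<le> (\<Sum>i\<in>V. \<Sum>j\<in>V. if i \<in> K then m j else if j \<in> K then m i else 0)"
    unfolding m_def using nonneg l'
    by (intro sum_mono) (simp add: min_decrease_after_payment)
  also have "\<dots> = k * (\<Sum>j\<in>V. m j) + k * (\<Sum>i\<in>V - K. m i)"
    by (subst split_V) (simp add: indicator_K sum_distrib_left k_def)
  also have "\<dots> = k * (\<Sum>j\<in>V. m j) + k * ((\<Sum>j\<in>V. m j) - (\<Sum>j\<in>K. m j))"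
    by (simp add: split_V[of m])
  finally have pairs: "(\<Sum>i\<in>V. \<Sum>j\<in>V. b - min (l' i) (l' j)) - (\<Sum>i\<in>V. \<Sum>j\<in>V. b - min (l i) (l j))
      \<le> 2 * k * (\<Sum>j\<in>V. m j) - k * (\<Sum>j\<in>K. m j)"
    by (simp add: algebra_simps)
  have "(\<Sum>j\<in>K. m j) \<le> k * (\<Sum>j\<in>K. m j)"
  proof (cases "K = {}")
    case False
    then have "1 \<le> k"
      using fin KV by (simp add: k_def Suc_le_eq card_gt_0_iff finite_subset)
    moreover have "0 \<le> (\<Sum>j\<in>K. m j)"
      using KV m_nonneg by (intro sum_nonneg) auto
    ultimately show ?thesis
      by (simp add: mult_le_cancel_right1)
  qed simp
  moreover have "2 * k * (\<Sum>j\<in>V. m j) \<le> 2 * k * c"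
    using price by (simp add: m_def k_def mult_left_mono)
  ultimately show ?thesis
    using spent pairs unfolding deficit_def k_def by linarith
qed

lemma sum_min_level_exists:
  fixes l :: "'a \<Rightarrow> real"
  assumes "finite X" "\<forall>j\<in>X. 0 \<le> l j" "0 \<le> c" "0 \<le> x" "c \<le> (\<Sum>j\<in>X. min (l j) x)"
  shows "\<exists>\<rho>\<in>{0..x}. (\<Sum>j\<in>X. min (l j) \<rho>) = c"
proof -
  have "(\<Sum>j\<in>X. min (l j) 0) = 0"
    using assms(2) by (intro sum.neutral) simp
  moreover have "continuous_on {0..x} (\<lambda>\<rho>. \<Sum>j\<in>X. min (l j) \<rho>)"
    by (intro continuous_intros)
  ultimately show ?thesis
    using IVT'[of "\<lambda>\<rho>. \<Sum>j\<in>X. min (l j) \<rho>" 0 c x] assms(3-5) by auto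
qed

lemma supporters_pay_at_most_cost:
  assumes "finite N" "\<forall>i. 0 \<le> l i" "0 \<le> cost t" "0 \<le> \<rho>"
    and minimal: "\<forall>\<rho>'. affordable N cost A l \<rho>' t \<longrightarrow> \<rho> \<le> \<rho>'"
  shows "(\<Sum>j\<in>supporters N A t. min (l j) \<rho>) \<le> cost t"
proof (rule ccontr)
  assume "\<not> ?thesis"
  then obtain \<rho>' where "\<rho>' \<in> {0..\<rho>}" "(\<Sum>j\<in>supporters N A t. min (l j) \<rho>') = cost t"
    using sum_min_level_exists[of "supporters N A t" l "cost t" \<rho>] assms(1-4)
    by (auto simp: supporters_def)
  with minimal \<open>\<not> ?thesis\<close> show False
    by (auto simp: affordable_def)
qed

lemma unaffordable_budgets_le_cost:
  assumes "finite N" "\<forall>i. 0 \<le> l i" "0 \<le> cost t"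
    and "\<not> (\<exists>\<rho>. affordable N cost A l \<rho> t)"
  shows "(\<Sum>j\<in>supporters N A t. l j) \<le> cost t"
proof -
  let ?S = "supporters N A t"
  have "finite ?S"
    using assms(1) by (simp add: supporters_def)
  then have "min (l j) (\<Sum>i\<in>?S. l i) = l j" if "j \<in> ?S" for j
    using that assms(2) by (simp add: member_le_sum)
  then have "(\<Sum>j\<in>?S. l j) = (\<Sum>j\<in>?S. min (l j) (\<Sum>i\<in>?S. l i))"
    by simp
  also have "\<dots> \<le> cost t"
    using assms by (intro supporters_pay_at_most_cost) (auto intro: sum_nonneg)
  finally show ?thesis .
qed

lemma mes_reachable_subset_nonneg:
  assumes "pb_instance N P B cost A"
    and "(mes_step N P cost A)\<^sup>*\<^sup>* ({}, (\<lambda>i. B / real (card N))) s"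
  shows "fst s \<subseteq> P \<and> (\<forall>i. 0 \<le> snd s i)"
  using assms(2)
proof (induction rule: rtranclp_induct)
  case base
  then show ?case
    using assms(1) by (simp add: pb_instance_def)
next
  case (step s s')
  then show ?case
    by (auto simp: mes_step_def affordable_def)
qed

lemma mes_step_preserves_deficit_bound:
  assumes pb: "pb_instance N P B cost A" and WP: "W \<subseteq> P" and nonneg: "\<forall>i. 0 \<le> l i"
    and step: "mes_step N P cost A (W, l) (W', l')"
    and t0: "t\<^sub>0 \<in> P - W'" "V \<subseteq> supporters N A t\<^sub>0" "cost t\<^sub>0 \<le> c"
    and bound: "deficit V b l \<le> 2 * c * total_sat A W V"
  shows "deficit V b l' \<le> 2 * c * total_sat A W' V"
proof -
  obtain t \<rho> where t: "t \<in> P - W" "affordable N cost A l \<rho> t"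
    and minimal: "\<forall>t'\<in>P - W. \<forall>\<rho>'. affordable N cost A l \<rho>' t' \<longrightarrow> \<rho> \<le> \<rho>'"
    and W': "W' = insert t W"
    and l': "l' = (\<lambda>i. if i \<in> supporters N A t then l i - min (l i) \<rho> else l i)"
    using step unfolding mes_step_def fst_conv snd_conv prod.inject by blast
  have "0 \<le> \<rho>"
    using t(2) by (simp add: affordable_def)
  have fin: "finite N" "finite W"
    using pb WP finite_subset by (auto simp: pb_instance_def)
  have "0 \<le> cost t\<^sub>0"
    using pb t0(1) by (auto simp: pb_instance_def less_imp_le)
  have "V \<subseteq> N"
    using t0(2) by (auto simp: supporters_def)
  then have "finite V"
    using fin(1) finite_subset by blast
  define K where "K = {i\<in>V. t \<in> A i}"
  have "(\<Sum>j\<in>V. min (l j) \<rho>) \<le> (\<Sum>j\<in>supporters N A t\<^sub>0. min (l j) \<rho>)"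
    using t0(2) fin(1) nonneg \<open>0 \<le> \<rho>\<close> by (intro sum_mono2) (auto simp: supporters_def)
  also have "\<dots> \<le> cost t\<^sub>0"
    using fin(1) nonneg \<open>0 \<le> cost t\<^sub>0\<close> \<open>0 \<le> \<rho>\<close> minimal t0(1) W'
    by (intro supporters_pay_at_most_cost) auto
  finally have "deficit V b l' \<le> deficit V b l + 2 * real (card K) * c"
    using \<open>finite V\<close> t0(3) nonneg t0(2) \<open>0 \<le> \<rho>\<close>
    by (intro deficit_after_payment[where \<rho> = \<rho>]) (auto simp: K_def l' supporters_def)
  moreover have "total_sat A W' V = total_sat A W V + real (card K)"
    unfolding W' K_def using \<open>finite V\<close> fin(2) t(1) by (intro total_sat_insert) auto
  ultimately show ?thesis
    using bound by (simp add: algebra_simps)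
qed

lemma mes_reachable_deficit_bound:
  assumes pb: "pb_instance N P B cost A"
    and t0: "t\<^sub>0 \<in> P" "V \<subseteq> supporters N A t\<^sub>0" "cost t\<^sub>0 \<le> c"
    and run: "(mes_step N P cost A)\<^sup>*\<^sup>* ({}, (\<lambda>i. B / real (card N))) s"
  shows "t\<^sub>0 \<notin> fst s \<Longrightarrow> deficit V (B / real (card N)) (snd s) \<le> 2 * c * total_sat A (fst s) V"
  using run
proof (induction rule: rtranclp_induct)
  case base
  then show ?case
    by (simp add: total_sat_def)
next
  case (step s s')
  obtain W l W' l' where s: "s = (W, l)" "s' = (W', l')"
    by fastforce
  have WP: "W \<subseteq> P" and nonneg: "\<forall>i. 0 \<le> l i"
    using mes_reachable_subset_nonneg[OF pb step.hyps(1)] by (auto simp: s)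
  have unselected: "t\<^sub>0 \<in> P - W'" "t\<^sub>0 \<notin> W"
    using step.prems step.hyps(2) t0(1) by (auto simp: s mes_step_def)
  have "deficit V (B / real (card N)) l \<le> 2 * c * total_sat A W V"
    using step.IH unselected(2) by (simp add: s)
  with step.hyps(2) show ?case
    unfolding s fst_conv snd_conv
    using mes_step_preserves_deficit_bound[OF pb WP nonneg _ unselected(1) t0(2,3)] by blast
qed

lemma mes_outcome_total_sat_bound:
  assumes pb: "pb_instance N P B cost A" and outcome: "mes_outcome N P B cost A W"
    and t0: "t\<^sub>0 \<in> P - W" "V \<subseteq> supporters N A t\<^sub>0" "cost t\<^sub>0 \<le> c"
  shows "(real (card V) + 1) * (real (card V) * (B / real (card N)) - c) \<le> 2 * c * total_sat A W V"
proof -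
  let ?b = "B / real (card N)"
  obtain l where run: "(mes_step N P cost A)\<^sup>*\<^sup>* ({}, (\<lambda>i. ?b)) (W, l)"
    and terminal: "mes_terminal N P cost A (W, l)"
    using outcome unfolding mes_outcome_def by blast
  have nonneg: "\<forall>i. 0 \<le> l i"
    using mes_reachable_subset_nonneg[OF pb run] by simp
  have fin: "finite N" and "0 \<le> cost t\<^sub>0"
    using pb t0(1) by (auto simp: pb_instance_def less_imp_le)
  have "(\<Sum>i\<in>V. l i) \<le> (\<Sum>j\<in>supporters N A t\<^sub>0. l j)"
    using t0(2) fin nonneg by (intro sum_mono2) (auto simp: supporters_def)
  also have "\<dots> \<le> cost t\<^sub>0"
    using terminal t0(1) fin nonneg \<open>0 \<le> cost t\<^sub>0\<close>
    by (intro unaffordable_budgets_le_cost) (auto simp: mes_terminal_def)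
  finally have "real (card V) * ?b - c \<le> real (card V) * ?b - (\<Sum>i\<in>V. l i)"
    using t0(3) by linarith
  then have "(real (card V) + 1) * (real (card V) * ?b - c)
      \<le> (real (card V) + 1) * (real (card V) * ?b - (\<Sum>i\<in>V. l i))"
    by (intro mult_left_mono) auto
  also have "\<dots> \<le> deficit V ?b l"
    by (rule deficit_lower_bound)
  also have "\<dots> \<le> 2 * c * total_sat A W V"
    using mes_reachable_deficit_bound[OF pb _ t0(2,3) run] t0(1) by simp
  finally show ?thesis .
qed

lemma half_ratio_le_quotient:
  fixes c v b U C :: real
  assumes "0 < c" "0 < v" "0 \<le> U" "C \<le> v * b" "(v + 1) * (v * b - c) \<le> 2 * c * U"
  shows "(1/2) * (C / c - 1) \<le> U / v"
proof (cases "C \<le> c")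
  case True
  then have "(1/2) * (C / c - 1) \<le> 0"
    using assms(1) by (simp add: divide_le_eq)
  also have "\<dots> \<le> U / v"
    using assms(2,3) by simp
  finally show ?thesis .
next
  case False
  then have "v * (C - c) \<le> (v + 1) * (v * b - c)"
    using assms(2,4) by (intro mult_mono) auto
  with assms(5) have "v * (C - c) \<le> 2 * c * U"
    by linarith
  then show ?thesis
    using assms(1,2) by (simp add: field_simps)
qed

lemma mes_avg_sat_cohesive:
  assumes pb: "pb_instance N P B cost A" and T: "T \<subseteq> P" "T \<noteq> {}"
    and outcome: "mes_outcome N P B cost A W" and cohesive: "cohesive N B cost A T V"
  shows "min (real (card T)) ((1/2) * (setcost cost T / Max (cost ` T) - 1)) \<le> avg_sat A W V"
proof -
  have VN: "V \<subseteq> N" and approve: "\<forall>i\<in>V. T \<subseteq> A i"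
    and share: "setcost cost T / B \<le> real (card V) / real (card N)"
    using cohesive by (auto simp: cohesive_def)
  have fin: "finite N" "finite T" and "0 < B" and "0 < card N"
    using pb T(1) finite_subset by (auto simp: pb_instance_def card_gt_0_iff)
  have "0 < setcost cost T"
    unfolding setcost_def using pb T fin(2) by (intro sum_pos) (auto simp: pb_instance_def)
  with share \<open>0 < B\<close> \<open>0 < card N\<close> have "0 < card V"
    by (metis divide_pos_pos gr0I of_nat_0 div_0 not_less)
  have cost_T: "setcost cost T \<le> real (card V) * (B / real (card N))"
    using share \<open>0 < B\<close> \<open>0 < card N\<close> by (simp add: field_simps)
  have avg: "avg_sat A W V = total_sat A W V / real (card V)"
    by (simp add: avg_sat_def total_sat_def)
  show ?thesis
  proof (cases "T \<subseteq> W")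
    case True
    have "real (card T) \<le> real (card (W \<inter> A i))" if "i \<in> V" for i
    proof -
      have "finite (A i)"
        using that VN pb fin(2) by (meson pb_instance_def finite_subset subsetD)
      then show ?thesis
        using that True approve by (intro of_nat_mono card_mono) auto
    qed
    then have "real (card V) * real (card T) \<le> total_sat A W V"
      unfolding total_sat_def using sum_mono[of V "\<lambda>_. real (card T)"] by fastforce
    then have "real (card T) \<le> avg_sat A W V"
      using \<open>0 < card V\<close> by (simp add: avg field_simps)
    then show ?thesis
      by linarith
  next
    case False
    then obtain t\<^sub>0 where "t\<^sub>0 \<in> T" "t\<^sub>0 \<notin> W"
      by blast
    define c where "c = Max (cost ` T)"
    have "cost t\<^sub>0 \<le> c"
      using \<open>t\<^sub>0 \<in> T\<close> fin(2) unfolding c_def by simp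
    moreover have "0 < cost t\<^sub>0"
      using \<open>t\<^sub>0 \<in> T\<close> T(1) pb by (auto simp: pb_instance_def)
    ultimately have "0 < c"
      by linarith
    have "V \<subseteq> supporters N A t\<^sub>0"
      using VN approve \<open>t\<^sub>0 \<in> T\<close> by (auto simp: supporters_def)
    then have bound: "(real (card V) + 1) * (real (card V) * (B / real (card N)) - c)
        \<le> 2 * c * total_sat A W V"
      using mes_outcome_total_sat_bound[OF pb outcome] \<open>cost t\<^sub>0 \<le> c\<close>
        \<open>t\<^sub>0 \<in> T\<close> \<open>t\<^sub>0 \<notin> W\<close> T(1) by blast
    have "0 \<le> total_sat A W V"
      by (simp add: total_sat_def sum_nonneg)
    then have "(1/2) * (setcost cost T / c - 1) \<le> avg_sat A W V"
      unfolding avg using \<open>0 < card V\<close>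
      by (intro half_ratio_le_quotient[OF \<open>0 < c\<close> _ _ cost_T bound]) simp
    then show ?thesis
      unfolding c_def by linarith
  qed
qed

theorem theorem1:
  fixes N :: "'v set" and P :: "'p set" and B :: real and cost :: "'p \<Rightarrow> real"
    and A :: "'v \<Rightarrow> 'p set" and T W :: "'p set"
  assumes "pb_instance N P B cost A"
    and "T \<subseteq> P" and "T \<noteq> {}"
    and "mes_outcome N P B cost A W"
  shows "prop_degree N B cost A W T \<ge>
           ereal ((1/2) * (setcost cost T / Max (cost ` T) - 1))"
  unfolding prop_degree_def
  using mes_avg_sat_cohesive[OF assms] by (intro Sup_upper) blast

end
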